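(* Let $Q_1(\cdot\mid X)$ and $Q_2(\cdot\mid X)$ be conditional CDFs and define $Z_{Q_j}:=Q_j^{-1}(\Pi(Z\mid X)\mid X)$ for $j\in\{1,2\}$. Under monotonicity (for all $z'>z$, $A^{z'}\ge A^z$ with probability 1): if $Q_1$ stochastically dominates $Q_2$ (i.e. $Q_1(z\mid X)\le Q_2(z\mid X)$ for all $z$), then $\mathbb{P}[A^{Z_{Q_1}}\ge A^{Z_{Q_2}}]=1$; and if $Q_1$ is stochastically dominated by $Q_2$, then $\mathbb{P}[A^{Z_{Q_1}}\le A^{Z_{Q_2}}]=1$.
   Context: Covariates $X$, continuous instrument $Z\in\mathbb{R}$ with conditional CDF $\Pi(z\mid X)=P(Z\le z\mid X)$, binary treatment $A$. $A^z$ is the potential treatment had the instrument been set to $z$; for a random value $W$, $A^W$ is $A^z$ evaluated at $z=W$. $Q^{-1}(p\mid X)=\inf\{z:Q(z\mid X)\ge p\}$. *)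

theory Defs
  imports "HOL-Probability.Probability"
begin

definition is_cdf :: "(real \<Rightarrow> real) \<Rightarrow> bool" where
  "is_cdf F \<longleftrightarrow> mono F \<and> (\<forall>a. continuous (at_right a) F) \<and>
     (F \<longlongrightarrow> 0) at_bot \<and> (F \<longlongrightarrow> 1) at_top"

definition cond_quantile :: "(real \<Rightarrow> 'x \<Rightarrow> real) \<Rightarrow> real \<Rightarrow> 'x \<Rightarrow> real" where
  "cond_quantile Q p x = Inf {z. Q z x \<ge> p}"

text \<open>The quantile is a well-defined real number (the set is nonempty and bounded below).\<close>
definition quantile_finite :: "(real \<Rightarrow> 'x \<Rightarrow> real) \<Rightarrow> real \<Rightarrow> 'x \<Rightarrow> bool" where
  "quantile_finite Q p x \<longleftrightarrow> {z. Q z x \<ge> p} \<noteq> {} \<and> bdd_below {z. Q z x \<ge> p}"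

definition is_cond_cdf :: "'x measure \<Rightarrow> (real \<Rightarrow> 'x \<Rightarrow> real) \<Rightarrow> bool" where
  "is_cond_cdf MX Q \<longleftrightarrow> (\<forall>x\<in>space MX. is_cdf (\<lambda>z. Q z x)) \<and>
     (\<forall>z. (\<lambda>x. Q z x) \<in> borel_measurable MX)"

definition Z_Q :: "(real \<Rightarrow> 'x \<Rightarrow> real) \<Rightarrow> (real \<Rightarrow> 'x \<Rightarrow> real) \<Rightarrow> ('a \<Rightarrow> 'x) \<Rightarrow> ('a \<Rightarrow> real) \<Rightarrow> 'a \<Rightarrow> real" where
  "Z_Q Q Pcdf X Z \<omega> = cond_quantile Q (Pcdf (Z \<omega>) (X \<omega>)) (X \<omega>)"

end

theory Submission
  imports Defs
begin

text \<open>If Q1 lies below Q2 pointwise, every superlevel set of Q1 is contained in the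
corresponding one of Q2, so the quantile of Q1 is at least that of Q2 at every level; in
particular Z_Q1 \<ge> Z_Q2 pointwise, and monotonicity of the potential treatment transfers this
inequality to A.\<close>

lemma cond_quantile_antimono:
  assumes "\<And>z. Qa z x \<le> Qb z x"
    and "quantile_finite Qa p x" and "quantile_finite Qb p x"
  shows "cond_quantile Qb p x \<le> cond_quantile Qa p x"
proof -
  have "{z. p \<le> Qa z x} \<subseteq> {z. p \<le> Qb z x}"
    using assms(1) by (auto intro: order_trans)
  with assms(2,3) show ?thesis
    unfolding cond_quantile_def quantile_finite_def by (intro cInf_superset_mono) auto
qed

lemma mono_if_less_imp_le:
  fixes f :: "'a::order \<Rightarrow> 'b::order"
  assumes "\<forall>z z'. z < z' \<longrightarrow> f z \<le> f z'"
  shows "mono f"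
  using assms by (metis monoI order.order_iff_strict order_refl)

lemma AE_treatment_at_Z_Q_antimono:
  fixes Qa Qb Pcdf :: "real \<Rightarrow> 'x \<Rightarrow> real" and A :: "real \<Rightarrow> 'a \<Rightarrow> 'b::order"
  assumes "AE \<omega> in M. \<forall>z. Qa z (X \<omega>) \<le> Qb z (X \<omega>)"
    and "AE \<omega> in M. quantile_finite Qa (Pcdf (Z \<omega>) (X \<omega>)) (X \<omega>)"
    and "AE \<omega> in M. quantile_finite Qb (Pcdf (Z \<omega>) (X \<omega>)) (X \<omega>)"
    and "AE \<omega> in M. \<forall>z z'. z < z' \<longrightarrow> A z \<omega> \<le> A z' \<omega>"
  shows "AE \<omega> in M. A (Z_Q Qb Pcdf X Z \<omega>) \<omega> \<le> A (Z_Q Qa Pcdf X Z \<omega>) \<omega>"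
  using assms
proof eventually_elim
  case (elim \<omega>)
  have "Z_Q Qb Pcdf X Z \<omega> \<le> Z_Q Qa Pcdf X Z \<omega>"
    unfolding Z_Q_def using elim(1-3) by (intro cond_quantile_antimono) auto
  moreover have "mono (\<lambda>z. A z \<omega>)"
    using elim(4) by (rule mono_if_less_imp_le)
  ultimately show ?case
    by (auto dest: monoD)
qed

theorem proposition4:
  fixes M :: "'a measure" and MX :: "'x measure"
    and X :: "'a \<Rightarrow> 'x" and Z :: "'a \<Rightarrow> real"
    and Pcdf Q1 Q2 :: "real \<Rightarrow> 'x \<Rightarrow> real"
    and A :: "real \<Rightarrow> 'a \<Rightarrow> real"
  assumes "prob_space M"
    and "X \<in> M \<rightarrow>\<^sub>M MX"
    and "Z \<in> borel_measurable M"
    and Pi_cdf: "is_cond_cdf MX Pcdf"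
    and Pi_cond: "\<And>z. AE \<omega> in M. Pcdf z (X \<omega>) =
        real_cond_exp M (vimage_algebra (space M) X MX) (indicator {\<omega>\<in>space M. Z \<omega> \<le> z}) \<omega>"
    and A_binary: "\<And>z \<omega>. A z \<omega> \<in> {0, 1}"
    and A_meas: "\<And>z. A z \<in> borel_measurable M"
    and monotonicity: "AE \<omega> in M. \<forall>z z'. z < z' \<longrightarrow> A z \<omega> \<le> A z' \<omega>"
    and Q1_cdf: "is_cond_cdf MX Q1"
    and Q2_cdf: "is_cond_cdf MX Q2"
    and Q1_fin: "AE \<omega> in M. quantile_finite Q1 (Pcdf (Z \<omega>) (X \<omega>)) (X \<omega>)"
    and Q2_fin: "AE \<omega> in M. quantile_finite Q2 (Pcdf (Z \<omega>) (X \<omega>)) (X \<omega>)"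
  shows "((AE \<omega> in M. \<forall>z. Q1 z (X \<omega>) \<le> Q2 z (X \<omega>)) \<longrightarrow>
            (AE \<omega> in M. A (Z_Q Q1 Pcdf X Z \<omega>) \<omega> \<ge> A (Z_Q Q2 Pcdf X Z \<omega>) \<omega>))
       \<and> ((AE \<omega> in M. \<forall>z. Q1 z (X \<omega>) \<ge> Q2 z (X \<omega>)) \<longrightarrow>
            (AE \<omega> in M. A (Z_Q Q1 Pcdf X Z \<omega>) \<omega> \<le> A (Z_Q Q2 Pcdf X Z \<omega>) \<omega>))"
proof (intro conjI impI)
  assume "AE \<omega> in M. \<forall>z. Q1 z (X \<omega>) \<le> Q2 z (X \<omega>)"
  with Q1_fin Q2_fin monotonicity
  show "AE \<omega> in M. A (Z_Q Q1 Pcdf X Z \<omega>) \<omega> \<ge> A (Z_Q Q2 Pcdf X Z \<omega>) \<omega>"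
    by (intro AE_treatment_at_Z_Q_antimono)
next
  assume "AE \<omega> in M. \<forall>z. Q1 z (X \<omega>) \<ge> Q2 z (X \<omega>)"
  with Q1_fin Q2_fin monotonicity
  show "AE \<omega> in M. A (Z_Q Q1 Pcdf X Z \<omega>) \<omega> \<le> A (Z_Q Q2 Pcdf X Z \<omega>) \<omega>"
    by (intro AE_treatment_at_Z_Q_antimono)
qed

end
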